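(* For any positive integer $m$, any two words of length $m$ that are permutations of $\{1,2,\dots,m\}$ (i.e. each of $1,\dots,m$ occurs exactly once) are cyclic Knuth equivalent.
   Context: A word is a finite sequence of letters from a totally ordered alphabet (here the integers). A transformation of type $K'$ replaces three consecutive letters $yzx$ of a word with $x<y\le z$ by $yxz$. A transformation of type $K''$ replaces three consecutive letters $xzy$ with $x\le y<z$ by $zxy$. An elementary Knuth transformation is a transformation of type $K'$ or $K''$ or the inverse of one of these. The rotation $R$ moves the last letter of a word to the front (e.g. $3346354\mapsto4334635$). An elementary cyclic Knuth transformation is an elementary Knuth transformation or $R$; two words are cyclic Knuth equivalent if one can be obtained from the other by a finite sequence of elementary cyclic Knuth transformations. *)

theory Defs
  imports Main
begin

inductive knuthK1 :: "int list \<Rightarrow> int list \<Rightarrow> bool" where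
  "x < y \<Longrightarrow> y \<le> z \<Longrightarrow> knuthK1 (u @ [y, z, x] @ v) (u @ [y, x, z] @ v)"

inductive knuthK2 :: "int list \<Rightarrow> int list \<Rightarrow> bool" where
  "x \<le> y \<Longrightarrow> y < z \<Longrightarrow> knuthK2 (u @ [x, z, y] @ v) (u @ [z, x, y] @ v)"

definition rotR :: "int list \<Rightarrow> int list" where
  "rotR w = (if w = [] then [] else last w # butlast w)"

definition elem_cyc_knuth :: "int list \<Rightarrow> int list \<Rightarrow> bool" where
  "elem_cyc_knuth w w' \<longleftrightarrow>
     knuthK1 w w' \<or> knuthK2 w w' \<or> knuthK1 w' w \<or> knuthK2 w' w \<or> w' = rotR w"

definition cyc_knuth_equiv :: "int list \<Rightarrow> int list \<Rightarrow> bool" where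
  "cyc_knuth_equiv w w' \<longleftrightarrow> elem_cyc_knuth\<^sup>*\<^sup>* w w'"

end

theory Submission
  imports Defs "HOL-Library.Multiset"
begin

text \<open>Every permutation of \<open>1, \<dots>, m\<close> is equivalent to the identity word \<open>1 2 \<dots> m\<close>. Suppose
  the word is \<open>x (j+1) \<dots> m\<close> with \<open>x\<close> a permutation of \<open>1, \<dots>, j\<close>, and write \<open>x = y j z\<close>.
  The letters of \<open>z\<close> can be brought in front of \<open>j\<close> one at a time. If the last letter \<open>t\<close>
  of \<open>z\<close> is smaller than its left neighbour \<open>p\<close>, inverse K' moves let \<open>t\<close> sink through the
  increasing block \<open>(j+1) \<dots> m\<close>, and a rotation carries it to the front. Otherwise \<open>z\<close> has an
  ascent, Knuth moves bring an ascent \<open>c < d\<close> to the front of \<open>z\<close>, and an inverse K'' move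
  turns \<open>j c d\<close> into \<open>c j d\<close>. Once \<open>z\<close> is empty, induction on \<open>j\<close> applies.\<close>

definition knuth_step :: "int list \<Rightarrow> int list \<Rightarrow> bool" where
  "knuth_step w w' \<longleftrightarrow> knuthK1 w w' \<or> knuthK2 w w' \<or> knuthK1 w' w \<or> knuthK2 w' w"

definition knuth_equiv :: "int list \<Rightarrow> int list \<Rightarrow> bool" where
  "knuth_equiv = knuth_step\<^sup>*\<^sup>*"

lemma knuth_step_append:
  assumes "knuth_step w w'"
  shows "knuth_step (u @ w @ v) (u @ w' @ v)"
proof -
  have K1: "knuthK1 (u @ a @ v) (u @ b @ v)" if "knuthK1 a b" for a b
    using that by cases (metis append.assoc knuthK1.intros)
  have K2: "knuthK2 (u @ a @ v) (u @ b @ v)" if "knuthK2 a b" for a b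
    using that by cases (metis append.assoc knuthK2.intros)
  show ?thesis
    using assms K1 K2 unfolding knuth_step_def by blast
qed

lemma knuth_equiv_refl: "knuth_equiv w w"
  by (simp add: knuth_equiv_def)

lemma knuth_equiv_trans [trans]: "knuth_equiv a b \<Longrightarrow> knuth_equiv b c \<Longrightarrow> knuth_equiv a c"
  unfolding knuth_equiv_def by (rule rtranclp_trans)

lemma knuth_equiv_append: "knuth_equiv w w' \<Longrightarrow> knuth_equiv (u @ w @ v) (u @ w' @ v)"
  unfolding knuth_equiv_def
  by (induction rule: rtranclp_induct) (auto intro: rtranclp.rtrancl_into_rtrancl knuth_step_append)

lemma knuth_equiv_K1_inverse:
  "x < y \<Longrightarrow> y \<le> z \<Longrightarrow> knuth_equiv (u @ [y, x, z] @ v) (u @ [y, z, x] @ v)"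
  unfolding knuth_equiv_def knuth_step_def by (blast intro: knuthK1.intros)

lemma knuth_equiv_K2_inverse:
  "x \<le> y \<Longrightarrow> y < z \<Longrightarrow> knuth_equiv (u @ [z, x, y] @ v) (u @ [x, z, y] @ v)"
  unfolding knuth_equiv_def knuth_step_def by (blast intro: knuthK2.intros)

lemma knuth_equiv_ascent_to_front:
  "distinct (pre @ [a, b] @ post) \<Longrightarrow> a < b \<Longrightarrow>
    \<exists>c d r. knuth_equiv (pre @ [a, b] @ post) (c # d # r) \<and> c < d"
proof (induction pre arbitrary: a b post rule: rev_induct)
  case Nil
  then show ?case by (auto intro: knuth_equiv_refl)
next
  case (snoc c pre)
  then have "c \<noteq> a" "c \<noteq> b" by auto
  then consider "c < a" | "a < c" "c < b" | "b < c"
    using \<open>a < b\<close> by linarith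
  then show ?case
  proof cases
    case 1
    then show ?thesis
      using snoc.IH[of c a "b # post"] snoc.prems by simp
  next
    case 2
    have "knuth_equiv (pre @ [c, a, b] @ post) (pre @ [c, b, a] @ post)"
      using 2 by (intro knuth_equiv_K1_inverse) auto
    moreover obtain c' d r where "knuth_equiv (pre @ [c, b] @ a # post) (c' # d # r)" "c' < d"
      using snoc.IH[of c b "a # post"] snoc.prems 2 by auto
    ultimately show ?thesis
      by (auto intro: knuth_equiv_trans)
  next
    case 3
    have "knuth_equiv (pre @ [c, a, b] @ post) (pre @ [a, c, b] @ post)"
      using 3 snoc.prems by (intro knuth_equiv_K2_inverse) auto
    moreover obtain c' d r where "knuth_equiv (pre @ [a, c] @ b # post) (c' # d # r)" "c' < d"
      using snoc.IH[of a c "b # post"] snoc.prems 3 by auto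
    ultimately show ?thesis
      by (auto intro: knuth_equiv_trans)
  qed
qed

lemma knuth_equiv_sink_through_sorted:
  "sorted (p # B) \<Longrightarrow> t < p \<Longrightarrow> knuth_equiv (x @ [p, t] @ B) (x @ p # B @ [t])"
proof (induction B arbitrary: p x)
  case Nil
  then show ?case by (simp add: knuth_equiv_refl)
next
  case (Cons b B)
  have "knuth_equiv (x @ [p, t, b] @ B) (x @ [p, b, t] @ B)"
    using Cons.prems by (intro knuth_equiv_K1_inverse) auto
  moreover have "knuth_equiv ((x @ [p]) @ [b, t] @ B) ((x @ [p]) @ b # B @ [t])"
    using Cons.prems by (intro Cons.IH) auto
  ultimately show ?case
    by (auto intro: knuth_equiv_trans)
qed

lemma elem_cyc_knuth_iff: "elem_cyc_knuth w w' \<longleftrightarrow> knuth_step w w' \<or> w' = rotR w"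
  unfolding elem_cyc_knuth_def knuth_step_def by blast

lemma knuth_equiv_imp_cyc_knuth_equiv: "knuth_equiv w w' \<Longrightarrow> cyc_knuth_equiv w w'"
  unfolding knuth_equiv_def cyc_knuth_equiv_def
  by (rule rtranclp_mono[THEN predicate2D]) (auto simp: elem_cyc_knuth_iff)

lemma cyc_knuth_equiv_refl: "cyc_knuth_equiv w w"
  by (simp add: cyc_knuth_equiv_def)

lemma cyc_knuth_equiv_trans:
  "cyc_knuth_equiv a b \<Longrightarrow> cyc_knuth_equiv b c \<Longrightarrow> cyc_knuth_equiv a c"
  unfolding cyc_knuth_equiv_def by (rule rtranclp_trans)

lemma rotR_snoc: "rotR (xs @ [a]) = a # xs"
  by (simp add: rotR_def)

lemma cyc_knuth_equiv_rotate: "cyc_knuth_equiv (xs @ ys) (ys @ xs)"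
proof (induction ys arbitrary: xs rule: rev_induct)
  case Nil
  show ?case by (simp add: cyc_knuth_equiv_refl)
next
  case (snoc a ys)
  have "elem_cyc_knuth (xs @ ys @ [a]) ((a # xs) @ ys)"
    using rotR_snoc[of "xs @ ys" a] by (simp add: elem_cyc_knuth_iff)
  then have "cyc_knuth_equiv (xs @ ys @ [a]) ((a # xs) @ ys)"
    unfolding cyc_knuth_equiv_def by (rule r_into_rtranclp)
  with snoc.IH[of "a # xs"] show ?case
    by (auto intro: cyc_knuth_equiv_trans)
qed

lemma elem_cyc_knuth_reverse:
  assumes "elem_cyc_knuth w w'"
  shows "cyc_knuth_equiv w' w"
proof (cases "knuth_step w w'")
  case True
  then have "knuth_step w' w"
    by (auto simp: knuth_step_def)
  then show ?thesis
    by (intro knuth_equiv_imp_cyc_knuth_equiv) (simp add: knuth_equiv_def)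
next
  case False
  with assms have rot: "w' = rotR w"
    by (simp add: elem_cyc_knuth_iff)
  show ?thesis
  proof (cases w rule: rev_cases)
    case Nil
    then show ?thesis
      using rot by (simp add: rotR_def cyc_knuth_equiv_refl)
  next
    case (snoc xs a)
    then show ?thesis
      using rot cyc_knuth_equiv_rotate[of "[a]" xs] by (simp add: rotR_snoc)
  qed
qed

lemma cyc_knuth_equiv_sym: "cyc_knuth_equiv a b \<Longrightarrow> cyc_knuth_equiv b a"
  unfolding cyc_knuth_equiv_def
proof (induction rule: rtranclp_induct)
  case base
  show ?case by simp
next
  case (step b c)
  from elem_cyc_knuth_reverse[OF step(2)] step(3) show ?case
    unfolding cyc_knuth_equiv_def by (rule rtranclp_trans)
qed

lemma knuth_step_mset: "knuth_step w w' \<Longrightarrow> mset w = mset w'"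
  unfolding knuth_step_def by (auto elim!: knuthK1.cases knuthK2.cases simp: ac_simps)

lemma elem_cyc_knuth_mset: "elem_cyc_knuth w w' \<Longrightarrow> mset w = mset w'"
  by (cases w rule: rev_cases) (auto simp: elem_cyc_knuth_iff rotR_def dest: knuth_step_mset)

lemma cyc_knuth_equiv_mset: "cyc_knuth_equiv w w' \<Longrightarrow> mset w = mset w'"
  unfolding cyc_knuth_equiv_def
  by (induction rule: rtranclp_induct) (auto dest: elem_cyc_knuth_mset)

lemma cyc_knuth_equiv_descent_to_front:
  "sorted (p # B) \<Longrightarrow> t < p \<Longrightarrow> cyc_knuth_equiv (x @ [p, t] @ B) (t # x @ p # B)"
proof -
  assume "sorted (p # B)" "t < p"
  then have "knuth_equiv (x @ [p, t] @ B) ((x @ p # B) @ [t])"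
    using knuth_equiv_sink_through_sorted by simp
  then have "cyc_knuth_equiv (x @ [p, t] @ B) ((x @ p # B) @ [t])"
    by (rule knuth_equiv_imp_cyc_knuth_equiv)
  then show ?thesis
    using cyc_knuth_equiv_rotate[of "x @ p # B" "[t]"] by (auto intro: cyc_knuth_equiv_trans)
qed

lemma knuth_equiv_move_ascent_past_larger:
  assumes "distinct z" "\<forall>x\<in>set z. x < k" "z = pre @ [a, b] @ post" "a < b"
  shows "\<exists>c z'. knuth_equiv (k # z) (c # k # z') \<and> mset z = mset (c # z')"
proof -
  obtain c d r where cdr: "knuth_equiv z (c # d # r)" "c < d"
    using knuth_equiv_ascent_to_front[of pre a b post] assms(1,3,4) by blast
  then have mset_z: "mset z = mset (c # d # r)"
    by (intro cyc_knuth_equiv_mset knuth_equiv_imp_cyc_knuth_equiv)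
  then have "d < k"
    using mset_eq_setD[OF mset_z] assms(2) by auto
  have "knuth_equiv (k # z) ([] @ [k, c, d] @ r)"
    using knuth_equiv_append[OF cdr(1), of "[k]" "[]"] by simp
  also have "knuth_equiv \<dots> ([] @ [c, k, d] @ r)"
    using cdr(2) \<open>d < k\<close> by (intro knuth_equiv_K2_inverse) auto
  finally have "knuth_equiv (k # z) (c # k # d # r)"
    by simp
  with mset_z show ?thesis
    by blast
qed

lemma last_letter_descent_or_ascent:
  fixes k t :: "'a :: linorder"
  assumes "distinct (z @ [t])" "\<forall>a\<in>set (z @ [t]). a < k"
  obtains (descent) xs p where "k # z = xs @ [p]" "t < p" "p \<le> k"
    | (ascent) z' s where "z = z' @ [s]" "s < t"
proof (cases z rule: rev_cases)
  case Nil
  then show ?thesis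
    using descent[of "[]" k] assms(2) by simp
next
  case (snoc z' s)
  with assms have "s \<noteq> t" "s < k"
    by auto
  then consider "t < s" | "s < t"
    using neqE by blast
  then show ?thesis
    using descent[of "k # z'" s] ascent[of z' s] snoc \<open>s < k\<close> by cases auto
qed

lemma pull_smaller_letters_before:
  assumes "sorted (k # B)"
  shows "distinct z \<Longrightarrow> \<forall>a\<in>set z. a < k \<Longrightarrow>
    \<exists>y'. cyc_knuth_equiv (y @ k # z @ B) (y' @ k # B)"
proof (induction "length z" arbitrary: y z rule: less_induct)
  case less
  show ?case
  proof (cases z rule: rev_cases)
    case Nil
    then show ?thesis by (auto intro: cyc_knuth_equiv_refl)
  next
    case (snoc z' t)
    from less.prems snoc consider (descent) xs p where "k # z' = xs @ [p]" "t < p" "p \<le> k"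
      | (ascent) z'' s where "z' = z'' @ [s]" "s < t"
      by (metis last_letter_descent_or_ascent)
    then show ?thesis
    proof cases
      case descent
      have "sorted (p # B)"
        using assms \<open>p \<le> k\<close> by auto
      then have "cyc_knuth_equiv ((y @ xs) @ [p, t] @ B) (t # (y @ xs) @ p # B)"
        using \<open>t < p\<close> by (rule cyc_knuth_equiv_descent_to_front)
      moreover have "y @ k # z @ B = (y @ xs) @ [p, t] @ B"
        "(t # y) @ k # z' @ B = t # (y @ xs) @ p # B"
        using arg_cong[OF descent(1), of "\<lambda>w. y @ w @ t # B"]
          arg_cong[OF descent(1), of "\<lambda>w. t # y @ w @ B"] snoc by simp_all
      ultimately have "cyc_knuth_equiv (y @ k # z @ B) ((t # y) @ k # z' @ B)"
        by (simp only:)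
      moreover obtain y' where "cyc_knuth_equiv ((t # y) @ k # z' @ B) (y' @ k # B)"
        using less.hyps[of z' "t # y"] less.prems snoc by auto
      ultimately show ?thesis
        by (blast intro: cyc_knuth_equiv_trans)
    next
      case ascent
      have "\<exists>c z0. knuth_equiv (k # z) (c # k # z0) \<and> mset z = mset (c # z0)"
        using less.prems snoc ascent by (intro knuth_equiv_move_ascent_past_larger) auto
      then obtain c z0 where c_z0: "knuth_equiv (k # z) (c # k # z0)" "mset z = mset (c # z0)"
        by blast
      then have "cyc_knuth_equiv (y @ k # z @ B) ((y @ [c]) @ k # z0 @ B)"
        using knuth_equiv_imp_cyc_knuth_equiv knuth_equiv_append[OF c_z0(1), of y B] by simp
      moreover have "length z0 < length z" "distinct z0" "\<forall>a\<in>set z0. a < k"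
        using mset_eq_length[OF c_z0(2)] mset_eq_imp_distinct_iff[OF c_z0(2)]
          mset_eq_setD[OF c_z0(2)] less.prems by auto
      then obtain y' where "cyc_knuth_equiv ((y @ [c]) @ k # z0 @ B) (y' @ k # B)"
        using less.hyps[of z0 "y @ [c]"] by blast
      ultimately show ?thesis
        by (blast intro: cyc_knuth_equiv_trans)
    qed
  qed
qed

lemma cyc_knuth_equiv_perm_append_upto:
  "j \<le> n \<Longrightarrow> distinct x \<Longrightarrow> set x = {1..int j} \<Longrightarrow>
    cyc_knuth_equiv (x @ [int j + 1..int n]) [1..int n]"
proof (induction j arbitrary: x)
  case 0
  then show ?case by (simp add: cyc_knuth_equiv_refl)
next
  case (Suc j)
  define k where "k = int j + 1"
  define B where "B = [k + 1..int n]"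
  have upto_k: "[k..int n] = k # B"
    using Suc.prems(1) unfolding B_def k_def by (simp add: upto_rec1)
  have set_x: "set x = insert k {1..int j}"
    using Suc.prems(3) atLeastAtMostPlus1_int_conv[of 1 "int j"] unfolding k_def
    by (simp add: add.commute)
  then obtain y z where x: "x = y @ k # z"
    by (metis insertI1 split_list)
  have x_minus_k: "set x - {k} = {1..int j}"
    using set_x unfolding k_def by auto
  have "sorted (k # B)"
    using sorted_upto[of k "int n"] unfolding upto_k .
  moreover have "distinct z"
    using Suc.prems(2) x by simp
  moreover have "set z \<subseteq> {1..int j}"
    using Suc.prems(2) x_minus_k x by auto
  then have "\<forall>a\<in>set z. a < k"
    unfolding k_def by auto
  ultimately obtain y' where y': "cyc_knuth_equiv (y @ k # z @ B) (y' @ k # B)"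
    by (blast dest: pull_smaller_letters_before)
  have "mset (y' @ k # B) = mset (y @ k # z @ B)"
    using cyc_knuth_equiv_mset[OF y'] by simp
  then have y'_mset: "mset y' = mset (y @ z)"
    by simp
  have "distinct (y @ z)" "k \<notin> set (y @ z)"
    using Suc.prems(2) x by auto
  then have "distinct y'"
    using mset_eq_imp_distinct_iff[OF y'_mset] by simp
  moreover have "set y' = {1..int j}"
    using mset_eq_setD[OF y'_mset] \<open>k \<notin> set (y @ z)\<close> x x_minus_k by auto
  ultimately have "cyc_knuth_equiv (y' @ k # B) [1..int n]"
    using Suc.IH[of y'] Suc.prems(1) upto_k by (simp add: k_def)
  moreover have "x @ [int (Suc j) + 1..int n] = y @ k # z @ B"
    using x unfolding B_def k_def by simp
  ultimately show ?case
    using cyc_knuth_equiv_trans[OF y'] by simp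
qed

theorem mainTheorem10:
  fixes m :: nat and u w :: "int list"
  assumes "m > 0"
    and "length u = m" and "distinct u" and "set u = {1..int m}"
    and "length w = m" and "distinct w" and "set w = {1..int m}"
  shows "cyc_knuth_equiv u w"
proof -
  have "cyc_knuth_equiv u [1..int m]" "cyc_knuth_equiv w [1..int m]"
    using cyc_knuth_equiv_perm_append_upto[of m m] assms by simp_all
  then show ?thesis
    by (blast intro: cyc_knuth_equiv_trans cyc_knuth_equiv_sym)
qed

end
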